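(* Let $h$ be a penalty function on the simplex $\Delta=\Delta(\{1,\dots,n\})\subset\mathbb{R}^n$ and let $Q(y)=\arg\max_{x\in\Delta}\{\langle y,x\rangle-h(x)\}$, $y\in\mathbb{R}^n$, be its induced choice map. Then: (i) $Q(y')=Q(y)$ for all $y,y'\in\mathbb{R}^n$ with $y'-y$ proportional to $(1,\dots,1)$; (ii) $Q(y-te_\beta)=Q(y)$ for all $t\ge0$ and all $y\in\mathbb{R}^n$ such that $Q_\beta(y)=0$; (iii) for every sequence $y_j\in\mathbb{R}^n$ with $y_{j,\alpha}-y_{j,\beta}\to-\infty$ for some $\beta\ne\alpha$, $Q_\alpha(y_j)\to0$.
   Context: A penalty function on $\Delta$ is $h:\Delta\to\mathbb{R}$ that is continuous, $C^\infty$ on the relative interior of every face of $\Delta$, and strongly convex: for some $K>0$ and norm $\|\cdot\|$, $h(tx_1+(1-t)x_2)\le th(x_1)+(1-t)h(x_2)-\tfrac12Kt(1-t)\|x_1-x_2\|^2$ for all $x_1,x_2\in\Delta$, $t\in[0,1]$. $e_\beta$ denotes the $\beta$-th standard basis vector. *)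

theory Defs
  imports "HOL-Analysis.Analysis"
begin

definition prob_simplex :: "(real ^ 'n::finite) set" where
  "prob_simplex = {x. (\<forall>i. 0 \<le> x $ i) \<and> (\<Sum>i\<in>UNIV. x $ i) = 1}"

fun Ck_on :: "nat \<Rightarrow> ('a::euclidean_space \<Rightarrow> real) \<Rightarrow> 'a set \<Rightarrow> bool" where
  "Ck_on 0 f U = continuous_on U f"
| "Ck_on (Suc k) f U =
     (f differentiable_on U \<and>
      (\<forall>b\<in>Basis. Ck_on k (\<lambda>x. frechet_derivative f (at x) b) U))"

definition smooth_on_open :: "('a::euclidean_space \<Rightarrow> real) \<Rightarrow> 'a set \<Rightarrow> bool" where
  "smooth_on_open f U \<longleftrightarrow> open U \<and> (\<forall>k. Ck_on k f U)"

text \<open>C^infinity on an arbitrary (e.g. relatively open, lower-dimensional) set A: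
  h agrees on A with a C^infinity function defined on an open neighbourhood of A.\<close>
definition smooth_on_set :: "('a::euclidean_space \<Rightarrow> real) \<Rightarrow> 'a set \<Rightarrow> bool" where
  "smooth_on_set h A \<longleftrightarrow>
     (\<exists>U g. A \<subseteq> U \<and> smooth_on_open g U \<and> (\<forall>x\<in>A. g x = h x))"

definition is_norm :: "('a::real_vector \<Rightarrow> real) \<Rightarrow> bool" where
  "is_norm N \<longleftrightarrow> (\<forall>x. 0 \<le> N x) \<and> (\<forall>x. N x = 0 \<longleftrightarrow> x = 0)
     \<and> (\<forall>c x. N (c *\<^sub>R x) = \<bar>c\<bar> * N x) \<and> (\<forall>x y. N (x + y) \<le> N x + N y)"

definition strongly_convex_on :: "'a::real_vector set \<Rightarrow> ('a \<Rightarrow> real) \<Rightarrow> bool" where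
  "strongly_convex_on D h \<longleftrightarrow>
     (\<exists>K N. K > 0 \<and> is_norm N \<and>
        (\<forall>x1\<in>D. \<forall>x2\<in>D. \<forall>t\<in>{0..1}.
           h (t *\<^sub>R x1 + (1 - t) *\<^sub>R x2)
             \<le> t * h x1 + (1 - t) * h x2 - 1/2 * K * t * (1 - t) * (N (x1 - x2))\<^sup>2))"

definition penalty_function :: "(real ^ 'n::finite \<Rightarrow> real) \<Rightarrow> bool" where
  "penalty_function h \<longleftrightarrow>
     continuous_on prob_simplex h
     \<and> (\<forall>F. F face_of prob_simplex \<longrightarrow> smooth_on_set h (rel_interior F))
     \<and> strongly_convex_on prob_simplex h"

definition choice_map :: "(real ^ 'n::finite \<Rightarrow> real) \<Rightarrow> real ^ 'n \<Rightarrow> real ^ 'n" where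
  "choice_map h y = (THE x. x \<in> prob_simplex \<and>
      (\<forall>x'\<in>prob_simplex. inner y x' - h x' \<le> inner y x - h x))"

end

theory Submission
  imports Defs
begin

text \<open>The objective \<open>\<langle>y, x\<rangle> - h x\<close> is continuous on the compact simplex, so a maximiser
  exists, and strong convexity of \<open>h\<close> makes it unique. Adding a constant to all payoffs adds
  the same constant to \<open>\<langle>y, x\<rangle>\<close> on the simplex, and lowering the payoff of an unused
  strategy lowers the objective everywhere except at points that also do not use it; in both
  cases the old maximiser stays optimal. Finally, moving the whole weight \<open>x\<^sub>\<alpha>\<close> of the
  maximiser onto \<open>\<beta>\<close> changes the linear part by \<open>x\<^sub>\<alpha> (y\<^sub>\<beta> - y\<^sub>\<alpha>)\<close> and the penalty by at
  most \<open>2 sup |h|\<close>, so optimality forces \<open>x\<^sub>\<alpha> (y\<^sub>\<beta> - y\<^sub>\<alpha>) \<le> 2 sup |h|\<close>.\<close>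

lemma compact_prob_simplex: "compact (prob_simplex :: (real ^ 'n::finite) set)"
proof -
  have "prob_simplex = (\<Inter>i. {x::real ^ 'n. 0 \<le> x $ i}) \<inter> {x. (\<Sum>i\<in>UNIV. x $ i) = 1}"
    unfolding prob_simplex_def by auto
  moreover have "closed {x::real ^ 'n. (\<Sum>i\<in>UNIV. x $ i) = 1}"
    by (intro closed_Collect_eq continuous_intros)
  moreover have "closed {x::real ^ 'n. 0 \<le> x $ i}" for i
    by (intro closed_Collect_le continuous_intros)
  ultimately have "closed (prob_simplex :: (real ^ 'n) set)"
    by (metis closed_INT closed_Int)
  moreover have "prob_simplex \<subseteq> cbox (0::real ^ 'n) (\<chi> i. 1)"
  proof
    fix x :: "real ^ 'n" assume x: "x \<in> prob_simplex"
    have "x $ i \<le> (\<Sum>j\<in>UNIV. x $ j)" for i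
      using x unfolding prob_simplex_def by (intro member_le_sum) auto
    with x show "x \<in> cbox 0 (\<chi> i. 1)"
      unfolding prob_simplex_def by (simp add: mem_box_cart)
  qed
  ultimately show ?thesis
    using bounded_cbox bounded_subset compact_eq_bounded_closed by blast
qed

lemma axis_in_prob_simplex: "axis i 1 \<in> prob_simplex"
  unfolding prob_simplex_def axis_def by simp

lemma convex_prob_simplex: "convex (prob_simplex :: (real ^ 'n::finite) set)"
  unfolding convex_def prob_simplex_def
  by (auto simp: sum.distrib sum_distrib_left[symmetric])

lemma prob_simplex_transfer_mass:
  assumes "x \<in> prob_simplex" "\<alpha> \<noteq> \<beta>"
  shows "x + x $ \<alpha> *\<^sub>R (axis \<beta> 1 - axis \<alpha> 1) \<in> prob_simplex"
proof -
  let ?x' = "x + x $ \<alpha> *\<^sub>R (axis \<beta> 1 - axis \<alpha> 1)"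
  have "?x' $ i = (if i = \<alpha> then 0 else if i = \<beta> then x $ \<beta> + x $ \<alpha> else x $ i)" for i
    using assms(2) by (auto simp: axis_def)
  then have "0 \<le> ?x' $ i" for i
    using assms(1) unfolding prob_simplex_def by auto
  moreover have "(\<Sum>i\<in>UNIV. ?x' $ i) = (\<Sum>i\<in>UNIV. x $ i)"
    using assms(2) by (simp add: sum.distrib axis_def sum_distrib_left[symmetric] sum_subtractf)
  ultimately show ?thesis
    using assms(1) unfolding prob_simplex_def by auto
qed

lemma inner_shift_prob_simplex:
  assumes "x \<in> prob_simplex"
  shows "inner (y + c *\<^sub>R (\<chi> i. 1)) x = inner y x + c"
proof -
  have "inner (y + c *\<^sub>R (\<chi> i. 1)) x = inner y x + c * (\<Sum>i\<in>UNIV. x $ i)"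
    by (simp add: inner_add_left inner_vec_def sum_distrib_left distrib_right sum.distrib)
  with assms show ?thesis
    unfolding prob_simplex_def by simp
qed

lemma strongly_convex_on_midpoint_less:
  assumes "strongly_convex_on D h" "x1 \<in> D" "x2 \<in> D" "x1 \<noteq> x2"
  shows "h ((1/2) *\<^sub>R x1 + (1/2) *\<^sub>R x2) < (h x1 + h x2) / 2"
proof -
  obtain K N where K: "K > 0" and N: "is_norm N" and
    sc: "\<forall>x1\<in>D. \<forall>x2\<in>D. \<forall>t\<in>{0..1}. h (t *\<^sub>R x1 + (1 - t) *\<^sub>R x2)
           \<le> t * h x1 + (1 - t) * h x2 - 1/2 * K * t * (1 - t) * (N (x1 - x2))\<^sup>2"
    using assms(1) unfolding strongly_convex_on_def by blast
  have "N (x1 - x2) \<noteq> 0"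
    using N assms(4) unfolding is_norm_def by simp
  then have "K * (N (x1 - x2))\<^sup>2 > 0"
    using K by simp
  moreover have "(1/2::real) \<in> {0..1}"
    by simp
  then have "h ((1/2) *\<^sub>R x1 + (1 - 1/2) *\<^sub>R x2)
      \<le> 1/2 * h x1 + (1 - 1/2) * h x2 - 1/2 * K * (1/2) * (1 - 1/2) * (N (x1 - x2))\<^sup>2"
    using sc assms(2,3) by blast
  ultimately show ?thesis
    by (simp add: algebra_simps)
qed

definition best_response :: "(real ^ 'n::finite \<Rightarrow> real) \<Rightarrow> real ^ 'n \<Rightarrow> real ^ 'n \<Rightarrow> bool" where
  "best_response h y x \<longleftrightarrow> x \<in> prob_simplex \<and>
      (\<forall>x'\<in>prob_simplex. inner y x' - h x' \<le> inner y x - h x)"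

lemma best_response_exists:
  assumes "continuous_on prob_simplex h"
  shows "\<exists>x. best_response h y x"
proof -
  have "continuous_on prob_simplex (\<lambda>x. inner y x - h x)"
    using assms by (intro continuous_intros)
  moreover have "prob_simplex \<noteq> {}"
    using axis_in_prob_simplex by blast
  ultimately show ?thesis
    using continuous_attains_sup[OF compact_prob_simplex] unfolding best_response_def by blast
qed

lemma best_response_unique:
  assumes "strongly_convex_on prob_simplex h" "best_response h y x1" "best_response h y x2"
  shows "x1 = x2"
proof (rule ccontr)
  assume "x1 \<noteq> x2"
  define m where "m = (1/2) *\<^sub>R x1 + (1/2) *\<^sub>R x2"
  have x12: "x1 \<in> prob_simplex" "x2 \<in> prob_simplex"
    using assms(2,3) unfolding best_response_def by auto
  then have "m \<in> prob_simplex"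
    unfolding m_def using convex_prob_simplex by (intro convexD) auto
  then have "inner y m - h m \<le> inner y x1 - h x1"
    using assms(2) unfolding best_response_def by blast
  moreover have "inner y x1 - h x1 = inner y x2 - h x2"
    using assms(2,3) x12 unfolding best_response_def by (meson order_antisym)
  moreover have "inner y m = (inner y x1 + inner y x2) / 2"
    unfolding m_def by (simp add: inner_add_right)
  moreover have "h m < (h x1 + h x2) / 2"
    unfolding m_def using strongly_convex_on_midpoint_less[OF assms(1) x12 \<open>x1 \<noteq> x2\<close>] .
  ultimately show False
    by argo
qed

lemma best_response_choice_map:
  assumes "penalty_function h"
  shows "best_response h y (choice_map h y)"
proof -
  have "\<exists>!x. best_response h y x"
    using assms best_response_exists best_response_unique
    unfolding penalty_function_def by metis
  then show ?thesis
    unfolding choice_map_def best_response_def[symmetric] by (rule theI')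
qed

lemma choice_map_eqI:
  assumes "penalty_function h" "best_response h y x"
  shows "choice_map h y = x"
  using assms best_response_choice_map best_response_unique
  unfolding penalty_function_def by metis

lemma choice_map_eq_if_no_gain:
  assumes "penalty_function h"
    and "\<And>x'. x' \<in> prob_simplex \<Longrightarrow>
           inner y' x' - inner y' (choice_map h y) \<le> inner y x' - inner y (choice_map h y)"
  shows "choice_map h y' = choice_map h y"
proof (rule choice_map_eqI[OF assms(1)])
  show "best_response h y' (choice_map h y)"
    using best_response_choice_map[OF assms(1), of y] assms(2)
    unfolding best_response_def by (smt (verit))
qed

lemma choice_map_shift:
  assumes "penalty_function h"
  shows "choice_map h (y + c *\<^sub>R (\<chi> i. 1)) = choice_map h y"
  using best_response_choice_map[OF assms, of y]
  by (intro choice_map_eq_if_no_gain[OF assms]) (simp add: best_response_def inner_shift_prob_simplex)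

lemma choice_map_lower_unused:
  assumes "penalty_function h" "choice_map h y $ \<beta> = 0" "t \<ge> 0"
  shows "choice_map h (y - t *\<^sub>R axis \<beta> 1) = choice_map h y"
proof (rule choice_map_eq_if_no_gain[OF assms(1)])
  fix x' :: "real ^ 'a" assume "x' \<in> prob_simplex"
  then have "t * x' $ \<beta> \<ge> 0"
    using assms(3) unfolding prob_simplex_def by simp
  with assms(2) show "inner (y - t *\<^sub>R axis \<beta> 1) x' - inner (y - t *\<^sub>R axis \<beta> 1) (choice_map h y)
      \<le> inner y x' - inner y (choice_map h y)"
    by (simp add: inner_diff_left inner_axis')
qed

lemma choice_map_weight_payoff_gap_le:
  assumes "penalty_function h" "\<alpha> \<noteq> \<beta>" "\<forall>x\<in>prob_simplex. \<bar>h x\<bar> \<le> B"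
  shows "choice_map h y $ \<alpha> * (y $ \<beta> - y $ \<alpha>) \<le> 2 * B"
proof -
  let ?x = "choice_map h y"
  let ?x' = "?x + ?x $ \<alpha> *\<^sub>R (axis \<beta> 1 - axis \<alpha> 1)"
  have x: "best_response h y ?x"
    using best_response_choice_map[OF assms(1)] .
  then have "?x \<in> prob_simplex"
    unfolding best_response_def by blast
  then have x': "?x' \<in> prob_simplex"
    using prob_simplex_transfer_mass assms(2) by blast
  then have "inner y ?x' - h ?x' \<le> inner y ?x - h ?x"
    using x unfolding best_response_def by blast
  moreover have "inner y ?x' = inner y ?x + ?x $ \<alpha> * (y $ \<beta> - y $ \<alpha>)"
    by (simp add: inner_axis algebra_simps)
  moreover have "\<bar>h ?x'\<bar> \<le> B" "\<bar>h ?x\<bar> \<le> B"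
    using assms(3) x' \<open>?x \<in> prob_simplex\<close> by auto
  ultimately show ?thesis
    by linarith
qed

lemma tendsto_zero_if_mult_at_top_bounded:
  fixes a d :: "'a \<Rightarrow> real"
  assumes "\<forall>\<^sub>F x in F. 0 \<le> a x" "\<forall>\<^sub>F x in F. a x * d x \<le> C" "filterlim d at_top F"
  shows "(a \<longlongrightarrow> 0) F"
proof (rule tendsto_sandwich[of "\<lambda>_. 0" a F "\<lambda>x. C / d x"])
  have "\<forall>\<^sub>F x in F. d x > 0"
    using assms(3) by (simp add: filterlim_at_top_dense)
  with assms(1,2) show "\<forall>\<^sub>F x in F. a x \<le> C / d x"
    by eventually_elim (simp add: pos_le_divide_eq)
  show "((\<lambda>x. C / d x) \<longlongrightarrow> 0) F"
    using assms(3) by (intro tendsto_divide_0[OF tendsto_const] filterlim_at_top_imp_at_infinity)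
qed (use assms(1) in auto)

theorem propositionA1:
  fixes h :: "real ^ 'n::finite \<Rightarrow> real"
  assumes "penalty_function h"
  shows "(\<forall>y y' :: real ^ 'n. \<forall>c::real. y' - y = c *\<^sub>R (\<chi> i. 1) \<longrightarrow>
            choice_map h y' = choice_map h y)
       \<and> (\<forall>(y :: real ^ 'n) \<beta> (t::real). t \<ge> 0 \<and> choice_map h y $ \<beta> = 0 \<longrightarrow>
            choice_map h (y - t *\<^sub>R axis \<beta> 1) = choice_map h y)
       \<and> (\<forall>(ys :: nat \<Rightarrow> real ^ 'n) \<alpha> \<beta>. \<beta> \<noteq> \<alpha> \<and>
            filterlim (\<lambda>j. ys j $ \<alpha> - ys j $ \<beta>) at_bot sequentially \<longrightarrow>
            (\<lambda>j. choice_map h (ys j) $ \<alpha>) \<longlonglongrightarrow> 0)"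
proof (intro conjI allI impI)
  fix y y' :: "real ^ 'n" and c :: real
  assume "y' - y = c *\<^sub>R (\<chi> i. 1)"
  then have "y' = y + c *\<^sub>R (\<chi> i. 1)"
    by (simp add: algebra_simps)
  then show "choice_map h y' = choice_map h y"
    using choice_map_shift[OF assms] by simp
next
  fix y :: "real ^ 'n" and \<beta> and t :: real
  assume "t \<ge> 0 \<and> choice_map h y $ \<beta> = 0"
  then show "choice_map h (y - t *\<^sub>R axis \<beta> 1) = choice_map h y"
    using choice_map_lower_unused[OF assms] by blast
next
  fix ys :: "nat \<Rightarrow> real ^ 'n" and \<alpha> \<beta>
  assume a: "\<beta> \<noteq> \<alpha> \<and> filterlim (\<lambda>j. ys j $ \<alpha> - ys j $ \<beta>) at_bot sequentially"
  have "bounded (h ` prob_simplex)"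
    using assms compact_prob_simplex unfolding penalty_function_def
    by (intro compact_imp_bounded compact_continuous_image) auto
  then obtain B where "\<forall>x\<in>prob_simplex. \<bar>h x\<bar> \<le> B"
    unfolding bounded_iff by auto
  then have "choice_map h (ys j) $ \<alpha> * (ys j $ \<beta> - ys j $ \<alpha>) \<le> 2 * B" for j
    using choice_map_weight_payoff_gap_le[OF assms] a by metis
  moreover have "0 \<le> choice_map h (ys j) $ \<alpha>" for j
    using best_response_choice_map[OF assms, of "ys j"]
    unfolding best_response_def prob_simplex_def by blast
  moreover have "filterlim (\<lambda>j. ys j $ \<beta> - ys j $ \<alpha>) at_top sequentially"
    using a by (simp add: filterlim_uminus_at_top)
  ultimately show "(\<lambda>j. choice_map h (ys j) $ \<alpha>) \<longlonglongrightarrow> 0"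
    by (intro tendsto_zero_if_mult_at_top_bounded[where d = "\<lambda>j. ys j $ \<beta> - ys j $ \<alpha>"])
      (auto intro: always_eventually)
qed

end
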